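(* A real symmetric $n\times n$ matrix $A$ is symmetrically tropically singular if and only if there are two cycle-distinct permutations $\sigma,\tau\in S_n$ that both realize the tropical determinant of $A$.
   Context: For a real $n\times n$ matrix $A$, its tropical determinant is $\min_{\sigma\in S_n}\sum_{i=1}^n A_{i,\sigma(i)}$, and $\sigma$ realizes it if $\sum_i A_{i,\sigma(i)}$ equals this minimum. Two permutations are cycle-similar if their disjoint cycle decompositions agree up to replacing some cycles by their inverses; otherwise they are cycle-distinct. A real symmetric $n\times n$ matrix $A$ is symmetrically tropically singular if, among the monomials $\prod_{i}X_{i,\sigma(i)}$ ($\sigma\in S_n$) in commuting variables subject to the identification $X_{i,j}=X_{j,i}$, with value $\sum_i A_{i,\sigma(i)}$, the minimum value is attained by at least two distinct monomials (distinct after the identification). *)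

theory Defs
  imports "HOL-Analysis.Analysis" "HOL-Library.Multiset" "HOL-Combinatorics.Permutations"
begin

text \<open>Matrices are indexed by a finite type 'n (so n = CARD('n)); permutations of S_n
  are the functions \<sigma> with \<sigma> permutes UNIV.\<close>

definition perm_weight :: "real^'n::finite^'n \<Rightarrow> ('n \<Rightarrow> 'n) \<Rightarrow> real" where
  "perm_weight A \<sigma> = (\<Sum>i\<in>UNIV. A $ i $ \<sigma> i)"

definition trop_det :: "real^'n::finite^'n \<Rightarrow> real" where
  "trop_det A = Min {perm_weight A \<sigma> | \<sigma>. \<sigma> permutes (UNIV :: 'n set)}"

definition realizes_trop_det :: "real^'n::finite^'n \<Rightarrow> ('n \<Rightarrow> 'n) \<Rightarrow> bool" where
  "realizes_trop_det A \<sigma> \<longleftrightarrow> \<sigma> permutes UNIV \<and> perm_weight A \<sigma> = trop_det A"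

definition perm_orbit :: "('n \<Rightarrow> 'n) \<Rightarrow> 'n \<Rightarrow> 'n set" where
  "perm_orbit \<sigma> x = {(\<sigma> ^^ k) x | k. True}"

definition cycle_at :: "('n \<Rightarrow> 'n) \<Rightarrow> 'n \<Rightarrow> ('n \<Rightarrow> 'n)" where
  "cycle_at \<sigma> x = (\<lambda>y. if y \<in> perm_orbit \<sigma> x then \<sigma> y else y)"

text \<open>Cycle-similar: every cycle of \<tau> is a cycle of \<sigma> or the inverse of one, namely the
  cycle of \<sigma> through the same point (so the cycle decompositions agree up to inverting
  some cycles).\<close>
definition cycle_similar :: "('n \<Rightarrow> 'n) \<Rightarrow> ('n \<Rightarrow> 'n) \<Rightarrow> bool" where
  "cycle_similar \<sigma> \<tau> \<longleftrightarrow>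
     (\<forall>x. cycle_at \<tau> x = cycle_at \<sigma> x \<or> cycle_at \<tau> x = inv (cycle_at \<sigma> x))"

text \<open>The monomial prod_i X_{i,\<sigma> i} with X_{ij} = X_{ji} identified: a multiset of unordered
  pairs {i, \<sigma> i}.\<close>
definition sym_monomial :: "('n::finite \<Rightarrow> 'n) \<Rightarrow> 'n set multiset" where
  "sym_monomial \<sigma> = image_mset (\<lambda>i. {i, \<sigma> i}) (mset_set UNIV)"

text \<open>The value of a monomial is well defined for symmetric A and equals perm_weight A \<sigma>;
  the minimum value is trop_det A. Singular: at least two distinct monomials attain it.\<close>
definition sym_trop_singular :: "real^'n::finite^'n \<Rightarrow> bool" where
  "sym_trop_singular A \<longleftrightarrow>
     card {sym_monomial \<sigma> | \<sigma>. \<sigma> permutes UNIV \<and> perm_weight A \<sigma> = trop_det A} \<ge> 2"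

end

theory Submission
  imports Defs "HOL-Combinatorics.Orbits"
begin

text \<open>Both conditions say that \<sigma> and \<tau> give every point x the same unordered pair of
  neighbours {\<sigma> x, inv \<sigma> x}. For monomials: the factors X_{x,y} through x are exactly those
  with y a neighbour of x, and conversely equal neighbour pairs let one re-index the factors of
  \<tau> as those of \<sigma>. For cycles: if \<tau> x is \<sigma> x (or inv \<sigma> x), matching neighbours force \<tau>
  to keep following \<sigma> (or inv \<sigma>) all the way around the cycle through x.\<close>

lemma perm_orbit_eq_orbit:
  assumes "permutation \<sigma>"
  shows "perm_orbit \<sigma> x = orbit \<sigma> x"
  using orbit_altdef_permutation[OF assms] unfolding perm_orbit_def by simp

lemma inv_in_orbit:
  assumes "permutation \<sigma>" and "y \<in> orbit \<sigma> x"
  shows "inv \<sigma> y \<in> orbit \<sigma> x"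
  using assms orbit.step[of y "inv \<sigma>" x] orbit_inv_eq by metis

lemma cycle_at_self: "cycle_at \<sigma> x x = \<sigma> x"
  unfolding cycle_at_def perm_orbit_def by (metis (mono_tags) CollectI funpow_0)

lemma inv_cycle_at:
  assumes "permutation \<sigma>"
  shows "inv (cycle_at \<sigma> x) = cycle_at (inv \<sigma>) x"
proof (rule inv_equality)
  have "bij \<sigma>" using assms by (rule permutation_bijective)
  then have inv: "\<And>y. \<sigma> (inv \<sigma> y) = y" "\<And>y. inv \<sigma> (\<sigma> y) = y"
    by (simp_all add: bij_is_surj surj_f_inv_f bij_is_inj)
  have orbits: "perm_orbit \<sigma> x = orbit \<sigma> x" "perm_orbit (inv \<sigma>) x = orbit \<sigma> x"
    using assms permutation_inverse orbit_inv_eq perm_orbit_eq_orbit by metis+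
  note closed = orbit.step[of _ \<sigma> x] inv_in_orbit[OF assms]
  show "cycle_at (inv \<sigma>) x (cycle_at \<sigma> x y) = y" for y
    unfolding cycle_at_def orbits by (auto simp: inv closed)
  show "cycle_at \<sigma> x (cycle_at (inv \<sigma>) x y) = y" for y
    unfolding cycle_at_def orbits by (auto simp: inv closed)
qed

lemma inv_cycle_at_self:
  assumes "permutation \<sigma>"
  shows "inv (cycle_at \<sigma> x) x = inv \<sigma> x"
  by (simp add: inv_cycle_at[OF assms] cycle_at_self)

definition same_neighbours :: "('a \<Rightarrow> 'a) \<Rightarrow> ('a \<Rightarrow> 'a) \<Rightarrow> bool" where
  "same_neighbours \<sigma> \<tau> \<longleftrightarrow> (\<forall>x. {\<sigma> x, inv \<sigma> x} = {\<tau> x, inv \<tau> x})"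

lemma same_neighbours_inv:
  assumes "bij \<sigma>" and "same_neighbours \<sigma> \<tau>"
  shows "same_neighbours (inv \<sigma>) \<tau>"
  using assms unfolding same_neighbours_def by (metis insert_commute inv_inv_eq)

lemma cycle_similar_imp_same_neighbours:
  assumes \<sigma>: "permutation \<sigma>" and \<tau>: "permutation \<tau>" and "cycle_similar \<sigma> \<tau>"
  shows "same_neighbours \<sigma> \<tau>"
  unfolding same_neighbours_def
proof
  fix x
  have \<tau>_at_x: "cycle_at \<tau> x x = \<tau> x" "inv (cycle_at \<tau> x) x = inv \<tau> x"
    using cycle_at_self inv_cycle_at_self[OF \<tau>] by auto
  from \<open>cycle_similar \<sigma> \<tau>\<close>
  consider "cycle_at \<tau> x = cycle_at \<sigma> x" | "cycle_at \<tau> x = cycle_at (inv \<sigma>) x"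
    unfolding cycle_similar_def inv_cycle_at[OF \<sigma>] by blast
  then show "{\<sigma> x, inv \<sigma> x} = {\<tau> x, inv \<tau> x}"
  proof cases
    case 1
    then show ?thesis using \<tau>_at_x cycle_at_self inv_cycle_at_self[OF \<sigma>] by metis
  next
    case 2
    have "inv (inv \<sigma>) = \<sigma>" using \<sigma> by (simp add: inv_inv_eq permutation_bijective)
    then show ?thesis
      using 2 \<tau>_at_x cycle_at_self inv_cycle_at_self[OF permutation_inverse[OF \<sigma>]]
      by (metis insert_commute)
  qed
qed

lemma funpow_eq_if_same_neighbours:
  assumes "bij \<sigma>" "bij \<tau>" "same_neighbours \<sigma> \<tau>" and "\<tau> x = \<sigma> x"
  shows "(\<tau> ^^ k) x = (\<sigma> ^^ k) x"
proof -
  have "(\<tau> ^^ k) x = (\<sigma> ^^ k) x \<and> (\<tau> ^^ Suc k) x = (\<sigma> ^^ Suc k) x" for k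
  proof (induction k)
    case 0
    then show ?case using \<open>\<tau> x = \<sigma> x\<close> by simp
  next
    case (Suc k)
    \<comment> \<open>both maps send y to z, so both inverses send z back to y, and the other neighbour of z
      must agree as well\<close>
    define y z where "y = (\<sigma> ^^ k) x" and "z = (\<sigma> ^^ Suc k) x"
    have "z = \<sigma> y" "z = \<tau> y" using Suc.IH y_def z_def by auto
    then have "inv \<sigma> z = y" "inv \<tau> z = y" using assms(1,2) by (metis bij_inv_eq_iff)+
    then have "{\<sigma> z, y} = {\<tau> z, y}" using assms(3) unfolding same_neighbours_def by metis
    then have "\<sigma> z = \<tau> z" by (metis doubleton_eq_iff)
    then show ?case using Suc.IH z_def by (metis funpow.simps(2) o_apply)
  qed
  then show ?thesis by blast
qed

lemma cycle_at_eq_if_same_neighbours: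
  assumes "bij \<sigma>" "bij \<tau>" "same_neighbours \<sigma> \<tau>" and "\<tau> x = \<sigma> x"
  shows "cycle_at \<tau> x = cycle_at \<sigma> x"
proof -
  note powers = funpow_eq_if_same_neighbours[OF assms]
  then have orbit: "perm_orbit \<tau> x = perm_orbit \<sigma> x" unfolding perm_orbit_def by auto
  have "\<tau> y = \<sigma> y" if "y \<in> perm_orbit \<sigma> x" for y
  proof -
    from that obtain k where "y = (\<sigma> ^^ k) x" unfolding perm_orbit_def by auto
    then show ?thesis using powers[of k] powers[of "Suc k"] by simp
  qed
  then show ?thesis unfolding cycle_at_def orbit by auto
qed

lemma same_neighbours_imp_cycle_similar:
  assumes \<sigma>: "permutation \<sigma>" and \<tau>: "permutation \<tau>" and same: "same_neighbours \<sigma> \<tau>"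
  shows "cycle_similar \<sigma> \<tau>"
  unfolding cycle_similar_def
proof
  fix x
  have bij: "bij \<sigma>" "bij (inv \<sigma>)" "bij \<tau>"
    using \<sigma> \<tau> by (simp_all add: permutation_bijective bij_imp_bij_inv)
  have "\<tau> x \<in> {\<sigma> x, inv \<sigma> x}" using same unfolding same_neighbours_def by blast
  then consider "\<tau> x = \<sigma> x" | "\<tau> x = inv \<sigma> x" by blast
  then show "cycle_at \<tau> x = cycle_at \<sigma> x \<or> cycle_at \<tau> x = inv (cycle_at \<sigma> x)"
  proof cases
    case 1
    then show ?thesis using cycle_at_eq_if_same_neighbours[OF bij(1,3) same] by blast
  next
    case 2
    then have "cycle_at \<tau> x = cycle_at (inv \<sigma>) x"
      using cycle_at_eq_if_same_neighbours[OF bij(2,3) same_neighbours_inv[OF bij(1) same]]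
      by blast
    then show ?thesis using inv_cycle_at[OF \<sigma>] by simp
  qed
qed

lemma cycle_similar_iff_same_neighbours:
  assumes "permutation \<sigma>" and "permutation \<tau>"
  shows "cycle_similar \<sigma> \<tau> \<longleftrightarrow> same_neighbours \<sigma> \<tau>"
  using assms cycle_similar_imp_same_neighbours same_neighbours_imp_cycle_similar by blast

lemma edge_in_range_iff:
  assumes "bij \<sigma>"
  shows "{x, y} \<in> range (\<lambda>i. {i, \<sigma> i}) \<longleftrightarrow> y \<in> {\<sigma> x, inv \<sigma> x}"
proof -
  have "{x, y} \<in> range (\<lambda>i. {i, \<sigma> i}) \<longleftrightarrow> (\<exists>i. (x = i \<and> y = \<sigma> i) \<or> (x = \<sigma> i \<and> y = i))"
    by (simp add: doubleton_eq_iff image_iff)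
  also have "\<dots> \<longleftrightarrow> y = \<sigma> x \<or> x = \<sigma> y"
    by blast
  also have "x = \<sigma> y \<longleftrightarrow> y = inv \<sigma> x"
    using assms by (metis bij_inv_eq_iff)
  finally show ?thesis by simp
qed

lemma sym_monomial_eq_imp_same_neighbours:
  fixes \<sigma> \<tau> :: "'n::finite \<Rightarrow> 'n"
  assumes "bij \<sigma>" "bij \<tau>" and "sym_monomial \<sigma> = sym_monomial \<tau>"
  shows "same_neighbours \<sigma> \<tau>"
proof -
  have "range (\<lambda>i. {i, \<sigma> i}) = range (\<lambda>i. {i, \<tau> i})"
    using arg_cong[OF assms(3), of set_mset] unfolding sym_monomial_def by simp
  then have "y \<in> {\<sigma> x, inv \<sigma> x} \<longleftrightarrow> y \<in> {\<tau> x, inv \<tau> x}" for x y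
    using edge_in_range_iff[OF assms(1)] edge_in_range_iff[OF assms(2)] by metis
  then show ?thesis
    unfolding same_neighbours_def by (intro allI set_eqI)
qed

lemma sym_monomial_reindex:
  fixes \<sigma> \<tau> \<pi> :: "'n::finite \<Rightarrow> 'n"
  assumes "inj \<pi>" and "\<And>i. {\<pi> i, \<tau> (\<pi> i)} = {i, \<sigma> i}"
  shows "sym_monomial \<sigma> = sym_monomial \<tau>"
proof -
  have "image_mset \<pi> (mset_set UNIV) = mset_set UNIV"
    using image_mset_mset_set[OF assms(1)] assms(1) by (simp add: finite_UNIV_inj_surj)
  then have "sym_monomial \<tau> = image_mset (\<lambda>i. {i, \<tau> i}) (image_mset \<pi> (mset_set UNIV))"
    unfolding sym_monomial_def by simp
  also have "\<dots> = sym_monomial \<sigma>"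
    unfolding sym_monomial_def multiset.map_comp comp_def assms(2) ..
  finally show ?thesis by simp
qed

lemma same_neighbours_imp_sym_monomial_eq:
  fixes \<sigma> \<tau> :: "'n::finite \<Rightarrow> 'n"
  assumes \<sigma>: "bij \<sigma>" and \<tau>: "bij \<tau>" and same: "same_neighbours \<sigma> \<tau>"
  shows "sym_monomial \<sigma> = sym_monomial \<tau>"
proof (rule sym_monomial_reindex)
  have reversed: "\<tau> i = inv \<sigma> i" "\<tau> (\<sigma> i) = i" if "\<tau> i \<noteq> \<sigma> i" for i
  proof -
    have "{\<sigma> i, inv \<sigma> i} = {\<tau> i, inv \<tau> i}" using same unfolding same_neighbours_def by blast
    then show "\<tau> i = inv \<sigma> i" "\<tau> (\<sigma> i) = i"
      using that \<tau> by (auto simp: doubleton_eq_iff bij_inv_eq_iff)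
  qed
  \<comment> \<open>\<pi> i is the end of the edge {i, \<sigma> i} from which \<tau> traverses it\<close>
  define \<pi> where "\<pi> i = (if \<tau> i = \<sigma> i then i else \<sigma> i)" for i
  show "{\<pi> i, \<tau> (\<pi> i)} = {i, \<sigma> i}" for i
    using reversed(2)[of i] by (auto simp: \<pi>_def)
  have disagree_at_image: "\<tau> (\<sigma> j) \<noteq> \<sigma> (\<sigma> j)" if "\<tau> j \<noteq> \<sigma> j" for j
  proof
    assume "\<tau> (\<sigma> j) = \<sigma> (\<sigma> j)"
    then have "\<sigma> (\<sigma> j) = j" using reversed(2)[OF that] by simp
    then have "inv \<sigma> j = \<sigma> j" using \<sigma> by (metis bij_inv_eq_iff)
    then show False using reversed(1)[OF that] that by simp
  qed
  show "inj \<pi>"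
  proof (rule injI)
    fix i j
    assume eq: "\<pi> i = \<pi> j"
    consider "\<tau> i = \<sigma> i" "\<tau> j = \<sigma> j" | "\<tau> i \<noteq> \<sigma> i" "\<tau> j \<noteq> \<sigma> j"
      | "\<tau> i = \<sigma> i" "\<tau> j \<noteq> \<sigma> j" | "\<tau> i \<noteq> \<sigma> i" "\<tau> j = \<sigma> j"
      by blast
    then show "i = j"
    proof cases
      case 1
      then show ?thesis using eq by (simp add: \<pi>_def)
    next
      case 2
      then show ?thesis using eq bij_is_inj[OF \<sigma>] by (simp add: \<pi>_def inj_eq)
    next
      case 3
      then show ?thesis using eq disagree_at_image[of j] by (simp add: \<pi>_def)
    next
      case 4
      then show ?thesis using eq disagree_at_image[of i] by (simp add: \<pi>_def)
    qed
  qed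
qed

lemma two_le_card_iff:
  assumes "finite S"
  shows "2 \<le> card S \<longleftrightarrow> (\<exists>a\<in>S. \<exists>b\<in>S. a \<noteq> b)"
proof -
  have "2 \<le> card S \<longleftrightarrow> \<not> card S \<le> Suc 0" by linarith
  then show ?thesis using card_le_Suc0_iff_eq[OF assms] by blast
qed

lemma sym_monomial_eq_iff_cycle_similar:
  fixes \<sigma> \<tau> :: "'n::finite \<Rightarrow> 'n"
  assumes "\<sigma> permutes UNIV" and "\<tau> permutes UNIV"
  shows "sym_monomial \<sigma> = sym_monomial \<tau> \<longleftrightarrow> cycle_similar \<sigma> \<tau>"
proof -
  have "permutation \<sigma>" "permutation \<tau>"
    using assms by (simp_all add: permutes_imp_permutation)
  moreover have "bij \<sigma>" "bij \<tau>"
    using assms by (simp_all add: permutes_imp_bij)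
  ultimately show ?thesis
    using cycle_similar_iff_same_neighbours sym_monomial_eq_imp_same_neighbours
      same_neighbours_imp_sym_monomial_eq by blast
qed

theorem proposition1:
  fixes A :: "real^'n::finite^'n"
  assumes "transpose A = A"
  shows "sym_trop_singular A \<longleftrightarrow>
    (\<exists>\<sigma> \<tau>. realizes_trop_det A \<sigma> \<and> realizes_trop_det A \<tau> \<and> \<not> cycle_similar \<sigma> \<tau>)"
proof -
  let ?M = "{sym_monomial \<sigma> | \<sigma>. \<sigma> permutes (UNIV :: 'n set) \<and> perm_weight A \<sigma> = trop_det A}"
  have "finite {\<sigma>. \<sigma> permutes (UNIV :: 'n set) \<and> perm_weight A \<sigma> = trop_det A}"
    by (rule finite_subset[OF _ finite_permutations]) auto
  then have "finite ?M"
    by (rule finite_image_set)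
  then have "sym_trop_singular A \<longleftrightarrow> (\<exists>a\<in>?M. \<exists>b\<in>?M. a \<noteq> b)"
    unfolding sym_trop_singular_def by (rule two_le_card_iff)
  also have "\<dots> \<longleftrightarrow> (\<exists>\<sigma> \<tau>. realizes_trop_det A \<sigma> \<and> realizes_trop_det A \<tau> \<and>
                          sym_monomial \<sigma> \<noteq> sym_monomial \<tau>)"
    unfolding realizes_trop_det_def by blast
  also have "\<dots> \<longleftrightarrow> (\<exists>\<sigma> \<tau>. realizes_trop_det A \<sigma> \<and> realizes_trop_det A \<tau> \<and> \<not> cycle_similar \<sigma> \<tau>)"
    using sym_monomial_eq_iff_cycle_similar unfolding realizes_trop_det_def by (metis (lifting))
  finally show ?thesis .
qed

end
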